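(* Let $N\ge1$, $M\in\mathbb{N}^*$, $s>0$, $p\in[1,\infty]$, let $(\rho_\varepsilon)_{\varepsilon>0}\subset L^1(\mathbb{R}^N)$ be a family of mollifiers and let $\omega\in C^+_{\mathrm{inc}}$. For $f\in L^p(\mathbb{R}^N)$ set $\mathscr{D}_\omega(\rho_\varepsilon,f):=\int_{\mathbb{R}^N}\rho_\varepsilon(h)\,\omega\big(|h|^{-s}\|\Delta_h^Mf\|_{L^p(\mathbb{R}^N)}\big)\mathrm{d}h$. Then \[\limsup_{\varepsilon\downarrow0}\mathscr{D}_\omega(\rho_\varepsilon,f)\le\omega\left(\limsup_{|h|\to0}\frac{\|\Delta_h^Mf\|_{L^p(\mathbb{R}^N)}}{|h|^s}\right)\quad\text{and}\quad \sup_{\varepsilon>0}\mathscr{D}_\omega(\rho_\varepsilon,f)\le\omega\left(\sup_{h\ne0}\frac{\|\Delta_h^Mf\|_{L^p(\mathbb{R}^N)}}{|h|^s}\right).\]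
   Context: Mollifiers: $\rho_\varepsilon\ge0$, $\int\rho_\varepsilon=1$, and $\lim_{\varepsilon\downarrow0}\int_{|z|\ge\delta}\rho_\varepsilon=0$ for all $\delta>0$. $\Delta_h^Mf(x):=\sum_{j=0}^M(-1)^{M-j}\binom{M}{j}f(x+jh)$. $C^+_{\mathrm{inc}}$ is the set of continuous increasing $\omega:[0,\infty)\to[0,\infty)$ with $\omega(0)=0$, $\lim_{t\to\infty}\omega(t)=\infty$, and roughly subadditive: there is $A>0$ with $\omega(t_1+t_2)\le A(\omega(t_1)+\omega(t_2))$ for all $t_1,t_2\ge0$. Convention $\omega(+\infty)=+\infty$. *)

theory Defs
  imports "HOL-Analysis.Analysis"
begin

text \<open>L^p norm (as an extended nonnegative real) w.r.t. Lebesgue measure,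
  for an exponent p in [1, infinity] represented as an ennreal (top = infinity).\<close>
definition Lp_norm :: "ennreal \<Rightarrow> ('a::euclidean_space \<Rightarrow> real) \<Rightarrow> ennreal" where
  "Lp_norm p f =
     (if p = top then Inf {C. AE x in lebesgue. ennreal \<bar>f x\<bar> \<le> C}
      else (let I = (\<integral>\<^sup>+ x. ennreal (\<bar>f x\<bar> powr enn2real p) \<partial>lebesgue)
            in if I = top then top else ennreal (enn2real I powr (1 / enn2real p))))"

definition in_Lp :: "ennreal \<Rightarrow> ('a::euclidean_space \<Rightarrow> real) \<Rightarrow> bool" where
  "in_Lp p f \<longleftrightarrow> f \<in> borel_measurable lebesgue \<and> Lp_norm p f < top"

definition fin_diff :: "nat \<Rightarrow> 'a::euclidean_space \<Rightarrow> ('a \<Rightarrow> real) \<Rightarrow> 'a \<Rightarrow> real" where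
  "fin_diff M h f x = (\<Sum>j = 0..M. (-1) ^ (M - j) * real (M choose j) * f (x + real j *\<^sub>R h))"

definition mollifiers :: "(real \<Rightarrow> 'a::euclidean_space \<Rightarrow> real) \<Rightarrow> bool" where
  "mollifiers \<rho> \<longleftrightarrow>
     (\<forall>\<epsilon>>0. integrable lebesgue (\<rho> \<epsilon>) \<and> (\<forall>z. \<rho> \<epsilon> z \<ge> 0)
             \<and> (\<integral>z. \<rho> \<epsilon> z \<partial>lebesgue) = 1) \<and>
     (\<forall>\<delta>>0. ((\<lambda>\<epsilon>. \<integral>z. indicator {z. norm z \<ge> \<delta>} z * \<rho> \<epsilon> z \<partial>lebesgue)
              \<longlongrightarrow> 0) (at_right 0))"

definition C_inc_plus :: "(real \<Rightarrow> real) \<Rightarrow> bool" where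
  "C_inc_plus \<omega> \<longleftrightarrow>
     continuous_on {0..} \<omega> \<and> mono_on {0..} \<omega> \<and> \<omega> 0 = 0 \<and> (\<forall>t\<ge>0. \<omega> t \<ge> 0) \<and>
     filterlim \<omega> at_top at_top \<and>
     (\<exists>A>0. \<forall>t1\<ge>0. \<forall>t2\<ge>0. \<omega> (t1 + t2) \<le> A * (\<omega> t1 + \<omega> t2))"

definition omega_ext :: "(real \<Rightarrow> real) \<Rightarrow> ennreal \<Rightarrow> ennreal" where
  "omega_ext \<omega> x = (if x = top then top else ennreal (\<omega> (enn2real x)))"

definition diff_quot :: "ennreal \<Rightarrow> nat \<Rightarrow> real \<Rightarrow> ('a::euclidean_space \<Rightarrow> real) \<Rightarrow> 'a \<Rightarrow> ennreal" where
  "diff_quot p M s f h = ennreal (norm h powr (- s)) * Lp_norm p (fin_diff M h f)"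

definition D_omega :: "(real \<Rightarrow> real) \<Rightarrow> ennreal \<Rightarrow> nat \<Rightarrow> real \<Rightarrow> ('a::euclidean_space \<Rightarrow> real)
    \<Rightarrow> ('a \<Rightarrow> real) \<Rightarrow> ennreal" where
  "D_omega \<omega> p M s \<rho>\<epsilon> f = (\<integral>\<^sup>+ h. ennreal (\<rho>\<epsilon> h) * omega_ext \<omega> (diff_quot p M s f h) \<partial>lebesgue)"

end

theory Submission
  imports Defs
begin

text \<open>Since \<open>f \<in> L\<^sup>p\<close> and Lebesgue measure is translation invariant,
  \<open>\<parallel>\<Delta>\<^sub>h\<^sup>M f\<parallel>\<^sub>p\<close> is bounded uniformly in \<open>h\<close>; hence the integrand
  \<open>\<omega>(|h|\<^sup>-\<^sup>s \<parallel>\<Delta>\<^sub>h\<^sup>M f\<parallel>\<^sub>p)\<close> is bounded away from \<open>h = 0\<close>.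
  The supremum bound is then immediate from \<open>\<integral>\<rho>\<^sub>\<epsilon> = 1\<close> and monotonicity of \<open>\<omega>\<close>.
  For the limsup bound, split the integral at \<open>|h| = \<delta>\<close>: the inner part is at most
  \<open>\<omega>(t)\<close> for any \<open>t\<close> above the limsup once \<open>\<delta>\<close> is small, and the outer part is a
  bounded function integrated against the mass of \<open>\<rho>\<^sub>\<epsilon>\<close> outside the \<open>\<delta>\<close>-ball,
  which vanishes as \<open>\<epsilon> \<down> 0\<close>; continuity of \<open>\<omega>\<close> finishes the argument.\<close>

section \<open>Translation invariance of Lebesgue measure\<close>

lemma
  fixes a :: "'a::euclidean_space"
  shows distr_lebesgue_translation: "distr lebesgue lebesgue (\<lambda>x. a + x) = lebesgue"
    and measurable_lebesgue_translation: "(\<lambda>x. a + x) \<in> lebesgue \<rightarrow>\<^sub>M lebesgue"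
proof -
  have eq: "(\<lambda>x. a + (\<Sum>j\<in>Basis. (1 * (x \<bullet> j)) *\<^sub>R j)) = (\<lambda>x. a + x)"
    by (simp add: euclidean_representation)
  have "lebesgue = density (distr lebesgue lebesgue (\<lambda>x. a + x)) (\<lambda>_. 1)"
    using lebesgue_affine_euclidean[of "\<lambda>_. 1" a] eq by simp
  then show "distr lebesgue lebesgue (\<lambda>x. a + x) = lebesgue"
    by (simp add: density_1)
  show "(\<lambda>x. a + x) \<in> lebesgue \<rightarrow>\<^sub>M lebesgue"
    using lebesgue_affine_measurable[of "\<lambda>_. 1" a] eq by simp
qed

lemma nn_integral_lebesgue_translation:
  fixes a :: "'a::euclidean_space" and g :: "'a \<Rightarrow> ennreal"
  assumes "g \<in> borel_measurable lebesgue"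
  shows "(\<integral>\<^sup>+ x. g (a + x) \<partial>lebesgue) = (\<integral>\<^sup>+ x. g x \<partial>lebesgue)"
proof -
  have "(\<integral>\<^sup>+ x. g x \<partial>lebesgue) = (\<integral>\<^sup>+ x. g x \<partial>distr lebesgue lebesgue (\<lambda>x. a + x))"
    by (simp only: distr_lebesgue_translation)
  also have "\<dots> = (\<integral>\<^sup>+ x. g (a + x) \<partial>lebesgue)"
    using measurable_lebesgue_translation[of a] assms by (simp add: nn_integral_distr)
  finally show ?thesis by simp
qed

lemma AE_lebesgue_translation:
  fixes a :: "'a::euclidean_space"
  assumes "AE x in lebesgue. P x"
  shows "AE x in lebesgue. P (a + x)"
proof -
  obtain N where N: "{x \<in> space lebesgue. \<not> P x} \<subseteq> N" "N \<in> null_sets lebesgue"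
    using assms unfolding eventually_ae_filter by blast
  let ?T = "\<lambda>x. a + x"
  have N_sets: "N \<in> sets lebesgue" using N(2) by (rule null_setsD2)
  have "emeasure lebesgue (?T -` N \<inter> space lebesgue) = emeasure (distr lebesgue lebesgue ?T) N"
    using measurable_lebesgue_translation N_sets by (rule emeasure_distr[symmetric])
  also have "\<dots> = 0"
    using N(2) by (simp only: distr_lebesgue_translation null_setsD1)
  finally have "?T -` N \<inter> space lebesgue \<in> null_sets lebesgue"
    using measurable_sets[OF measurable_lebesgue_translation N_sets] by (rule null_setsI)
  moreover have "{x \<in> space lebesgue. \<not> P (a + x)} \<subseteq> ?T -` N \<inter> space lebesgue"
    using N(1) by auto
  ultimately show ?thesis by (rule AE_I')
qed

lemma AE_lebesgue_neq: "AE x in lebesgue. x \<noteq> (c::'a::euclidean_space)"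
  using AE_completion[OF AE_lborel_singleton] .

section \<open>Uniform \<open>L\<^sup>p\<close> bound for finite differences\<close>

lemma powr_sum_le_card_powr_sum:
  fixes a :: "'b \<Rightarrow> real"
  assumes "finite J" "J \<noteq> {}" and a: "\<And>j. a j \<ge> 0" and "q > 0"
  shows "(\<Sum>j\<in>J. a j) powr q \<le> real (card J) powr q * (\<Sum>j\<in>J. a j powr q)"
proof -
  have "Max (a ` J) \<in> a ` J" using assms(1,2) by (intro Max_in) auto
  then obtain m where m: "m \<in> J" "a m = Max (a ` J)" by (metis imageE)
  have "(\<Sum>j\<in>J. a j) \<le> real (card J) * a m"
    using sum_bounded_above[of J a "a m"] m assms(1) by simp
  then have "(\<Sum>j\<in>J. a j) powr q \<le> (real (card J) * a m) powr q"
    using a assms(4) by (simp add: powr_mono2 sum_nonneg)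
  also have "\<dots> = real (card J) powr q * a m powr q"
    using a[of m] by (simp add: powr_mult)
  also have "\<dots> \<le> real (card J) powr q * (\<Sum>j\<in>J. a j powr q)"
    using member_le_sum[OF m(1) _ assms(1), of "\<lambda>j. a j powr q"] by (simp add: mult_left_mono)
  finally show ?thesis .
qed

lemma abs_fin_diff_le:
  "\<bar>fin_diff M h f x\<bar> \<le> 2 ^ M * (\<Sum>j = 0..M. \<bar>f (x + real j *\<^sub>R h)\<bar>)"
proof -
  have "\<bar>fin_diff M h f x\<bar> \<le> (\<Sum>j = 0..M. \<bar>(-1) ^ (M - j) * real (M choose j) * f (x + real j *\<^sub>R h)\<bar>)"
    unfolding fin_diff_def by (rule sum_abs)
  also have "\<dots> = (\<Sum>j = 0..M. real (M choose j) * \<bar>f (x + real j *\<^sub>R h)\<bar>)"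
    by (simp add: abs_mult)
  also have "\<dots> \<le> (\<Sum>j = 0..M. 2 ^ M * \<bar>f (x + real j *\<^sub>R h)\<bar>)"
  proof (intro sum_mono mult_right_mono)
    show "real (M choose j) \<le> 2 ^ M" for j
      using binomial_le_pow2[of M j] by (metis of_nat_le_iff of_nat_numeral of_nat_power)
  qed simp
  finally show ?thesis by (simp add: sum_distrib_left)
qed

lemma nn_integral_powr_fin_diff_le:
  fixes f :: "'a::euclidean_space \<Rightarrow> real"
  assumes f: "f \<in> borel_measurable lebesgue" and q: "q > 0"
  shows "(\<integral>\<^sup>+ x. ennreal (\<bar>fin_diff M h f x\<bar> powr q) \<partial>lebesgue)
    \<le> ennreal ((2 ^ M * real (Suc M)) powr q) * of_nat (Suc M) * (\<integral>\<^sup>+ x. ennreal (\<bar>f x\<bar> powr q) \<partial>lebesgue)"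
proof -
  define C where "C = (2 ^ M * real (Suc M)) powr q"
  let ?g = "\<lambda>x. ennreal (\<bar>f x\<bar> powr q)"
  have g: "?g \<in> borel_measurable lebesgue" using f by measurable
  have shifted: "(\<lambda>x. ?g (real j *\<^sub>R h + x)) \<in> borel_measurable lebesgue" for j
    using measurable_compose[OF measurable_lebesgue_translation g] by simp
  have pointwise: "ennreal (\<bar>fin_diff M h f x\<bar> powr q) \<le> ennreal C * (\<Sum>j=0..M. ?g (real j *\<^sub>R h + x))" for x
  proof -
    let ?S = "\<Sum>j=0..M. \<bar>f (x + real j *\<^sub>R h)\<bar>"
    have "\<bar>fin_diff M h f x\<bar> powr q \<le> (2 ^ M * ?S) powr q"
      using abs_fin_diff_le[of M h f x] q by (intro powr_mono2) auto
    also have "\<dots> = (2 ^ M) powr q * ?S powr q"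
      by (simp add: powr_mult sum_nonneg)
    also have "\<dots> \<le> (2 ^ M) powr q * (real (Suc M) powr q * (\<Sum>j=0..M. \<bar>f (x + real j *\<^sub>R h)\<bar> powr q))"
      using powr_sum_le_card_powr_sum[of "{0..M}" "\<lambda>j. \<bar>f (x + real j *\<^sub>R h)\<bar>" q] q
      by (intro mult_left_mono) auto
    also have "\<dots> = C * (\<Sum>j=0..M. \<bar>f (real j *\<^sub>R h + x)\<bar> powr q)"
      unfolding C_def by (simp add: add.commute mult.assoc powr_mult)
    finally have "ennreal (\<bar>fin_diff M h f x\<bar> powr q) \<le> ennreal (C * (\<Sum>j=0..M. \<bar>f (real j *\<^sub>R h + x)\<bar> powr q))"
      by (rule ennreal_leI)
    also have "\<dots> = ennreal C * (\<Sum>j=0..M. ?g (real j *\<^sub>R h + x))"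
      by (simp add: C_def ennreal_mult sum_nonneg)
    finally show ?thesis .
  qed
  have "(\<integral>\<^sup>+ x. ennreal (\<bar>fin_diff M h f x\<bar> powr q) \<partial>lebesgue)
      \<le> (\<integral>\<^sup>+ x. ennreal C * (\<Sum>j=0..M. ?g (real j *\<^sub>R h + x)) \<partial>lebesgue)"
    by (intro nn_integral_mono pointwise)
  also have "\<dots> = ennreal C * (\<Sum>j=0..M. \<integral>\<^sup>+ x. ?g (real j *\<^sub>R h + x) \<partial>lebesgue)"
    using shifted borel_measurable_sum[of "{0..M}" "\<lambda>j x. ?g (real j *\<^sub>R h + x)"]
    by (subst nn_integral_cmult) (auto simp only: nn_integral_sum)
  also have "\<dots> = ennreal C * of_nat (Suc M) * (\<integral>\<^sup>+ x. ?g x \<partial>lebesgue)"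
    by (simp add: nn_integral_lebesgue_translation[OF g] mult.assoc)
  finally show ?thesis unfolding C_def .
qed

lemma Lp_norm_top_fin_diff_bounded:
  fixes f :: "'a::euclidean_space \<Rightarrow> real"
  assumes "in_Lp top f"
  shows "\<exists>K<top. \<forall>h. Lp_norm top (fin_diff M h f) \<le> K"
proof -
  have "Inf {C. AE x in lebesgue. ennreal \<bar>f x\<bar> \<le> C} < top"
    using assms by (simp add: in_Lp_def Lp_norm_def)
  then obtain C where C: "AE x in lebesgue. ennreal \<bar>f x\<bar> \<le> C" "C < top"
    by (auto simp: Inf_less_iff)
  then obtain c where c: "AE x in lebesgue. \<bar>f x\<bar> \<le> c"
    by (cases C rule: ennreal_cases) (auto elim!: AE_mp intro!: AE_I2 simp: ennreal_le_iff)
  show ?thesis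
  proof (intro exI[of _ "ennreal (2 ^ M * (real (Suc M) * c))"] conjI allI)
    fix h
    have "AE x in lebesgue. \<forall>j\<in>{0..M}. \<bar>f (real j *\<^sub>R h + x)\<bar> \<le> c"
      by (rule AE_finite_allI) (auto intro: AE_lebesgue_translation[OF c])
    then have "AE x in lebesgue. ennreal \<bar>fin_diff M h f x\<bar> \<le> ennreal (2 ^ M * (real (Suc M) * c))"
    proof eventually_elim
      case (elim x)
      have "(\<Sum>j=0..M. \<bar>f (x + real j *\<^sub>R h)\<bar>) \<le> real (Suc M) * c"
        using sum_mono[of "{0..M}" "\<lambda>j. \<bar>f (x + real j *\<^sub>R h)\<bar>" "\<lambda>_. c"] elim
        by (simp add: add.commute)
      then show ?case
        using abs_fin_diff_le[of M h f x] by (intro ennreal_leI) (smt (verit) mult_left_mono zero_le_power)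
    qed
    then show "Lp_norm top (fin_diff M h f) \<le> ennreal (2 ^ M * (real (Suc M) * c))"
      unfolding Lp_norm_def by (auto intro: Inf_lower)
  qed simp
qed

lemma Lp_norm_finite_fin_diff_bounded:
  fixes f :: "'a::euclidean_space \<Rightarrow> real"
  assumes "0 < p" "p \<noteq> top" and "in_Lp p f"
  shows "\<exists>K<top. \<forall>h. Lp_norm p (fin_diff M h f) \<le> K"
proof -
  define q where "q = enn2real p"
  have q: "q > 0"
    using assms(1,2) unfolding q_def by (simp add: enn2real_positive_iff less_top)
  define I where "I = (\<integral>\<^sup>+x. ennreal (\<bar>f x\<bar> powr q) \<partial>lebesgue)"
  have "I \<noteq> top"
    using assms(2,3) unfolding in_Lp_def Lp_norm_def Let_def I_def q_def by auto
  define B where "B = ennreal ((2 ^ M * real (Suc M)) powr q) * of_nat (Suc M) * I"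
  have B: "B < top"
    unfolding B_def using \<open>I \<noteq> top\<close> by (simp add: ennreal_mult_less_top less_top of_nat_less_top)
  show ?thesis
  proof (intro exI[of _ "ennreal (enn2real B powr (1/q))"] conjI allI)
    fix h
    define J where "J = (\<integral>\<^sup>+x. ennreal (\<bar>fin_diff M h f x\<bar> powr q) \<partial>lebesgue)"
    have "J \<le> B"
      unfolding J_def B_def I_def
      using assms(3) q by (intro nn_integral_powr_fin_diff_le) (auto simp: in_Lp_def)
    then have "J \<noteq> top" and "enn2real J \<le> enn2real B"
      using B by (auto simp: enn2real_mono top_unique)
    moreover have "Lp_norm p (fin_diff M h f) = ennreal (enn2real J powr (1/q))"
      using assms(2) \<open>J \<noteq> top\<close> unfolding Lp_norm_def Let_def J_def q_def by presburger
    ultimately show "Lp_norm p (fin_diff M h f) \<le> ennreal (enn2real B powr (1/q))"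
      using q by (auto intro!: ennreal_leI powr_mono2)
  qed simp
qed

lemma Lp_norm_fin_diff_bounded:
  fixes f :: "'a::euclidean_space \<Rightarrow> real"
  assumes "0 < p" and "in_Lp p f"
  shows "\<exists>K<top. \<forall>h. Lp_norm p (fin_diff M h f) \<le> K"
  using assms Lp_norm_top_fin_diff_bounded[of f M] Lp_norm_finite_fin_diff_bounded[of p f M]
  by (cases "p = top") auto

section \<open>Monotonicity and continuity of the extended modulus\<close>

lemma omega_ext_mono:
  assumes "mono_on {0..} \<omega>" and "x \<le> y"
  shows "omega_ext \<omega> x \<le> omega_ext \<omega> y"
proof (cases "y = top")
  case False
  then have "x \<noteq> top" and "enn2real x \<le> enn2real y"
    using assms(2) by (auto simp: enn2real_mono less_top top_unique)
  then show ?thesis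
    using False mono_onD[OF assms(1)] by (auto simp: omega_ext_def intro!: ennreal_leI)
qed (simp add: omega_ext_def)

lemma omega_ext_less_top: "x < top \<Longrightarrow> omega_ext \<omega> x < top"
  by (simp add: omega_ext_def)

lemma Limsup_omega_ext_le:
  assumes cont: "continuous_on {0..} \<omega>" and mono: "mono_on {0..} \<omega>"
  shows "Limsup F (\<lambda>x. omega_ext \<omega> (g x)) \<le> omega_ext \<omega> (Limsup F g)"
proof (cases "Limsup F g = top")
  case False
  then obtain l where l: "Limsup F g = ennreal l" "l \<ge> 0"
    by (cases "Limsup F g" rule: ennreal_cases) auto
  show ?thesis
  proof (rule dense_ge)
    fix z assume z: "omega_ext \<omega> (Limsup F g) < z"
    show "Limsup F (\<lambda>x. omega_ext \<omega> (g x)) \<le> z"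
    proof (cases "z = top")
      case False
      then obtain z' where z': "z = ennreal z'" by (cases z rule: ennreal_cases) auto
      have "\<omega> l < z'"
      proof (rule ccontr)
        assume "\<not> \<omega> l < z'"
        then have "z \<le> omega_ext \<omega> (Limsup F g)"
          using l by (simp add: omega_ext_def z' ennreal_leI)
        with z show False by simp
      qed
      obtain d where d: "d > 0" "\<And>x. x \<in> {0..} \<Longrightarrow> dist x l < d \<Longrightarrow> dist (\<omega> x) (\<omega> l) < z' - \<omega> l"
        using cont l(2) \<open>\<omega> l < z'\<close> unfolding continuous_on_iff by (metis atLeast_iff diff_gt_0_iff_gt)
      define t where "t = l + d / 2"
      have "dist (\<omega> t) (\<omega> l) < z' - \<omega> l"
        using d l(2) by (intro d(2)) (auto simp: t_def dist_real_def)
      then have t: "l < t" "\<omega> t < z'"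
        using d(1) by (auto simp: t_def dist_real_def)
      have "eventually (\<lambda>x. g x < ennreal t) F"
        using t(1) l by (intro Limsup_lessD) (simp add: ennreal_lessI)
      then have "eventually (\<lambda>x. omega_ext \<omega> (g x) \<le> z) F"
      proof eventually_elim
        case (elim x)
        have "omega_ext \<omega> (g x) \<le> omega_ext \<omega> (ennreal t)"
          using elim by (intro omega_ext_mono[OF mono]) simp
        also have "\<dots> \<le> z"
          using t l(2) z' by (auto simp: omega_ext_def intro!: ennreal_leI)
        finally show ?case .
      qed
      then show ?thesis by (rule Limsup_bounded)
    qed simp
  qed
qed (simp add: omega_ext_def)

lemma omega_ext_diff_quot_bounded_off_0:
  fixes f :: "'a::euclidean_space \<Rightarrow> real"
  assumes "mono_on {0..} \<omega>" and "0 < p" "in_Lp p f" and "s \<ge> 0" "\<delta> > 0"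
  shows "\<exists>c<top. \<forall>h. \<delta> \<le> norm h \<longrightarrow> omega_ext \<omega> (diff_quot p M s f h) \<le> c"
proof -
  obtain K where K: "K < top" "\<And>h. Lp_norm p (fin_diff M h f) \<le> K"
    using Lp_norm_fin_diff_bounded[OF assms(2,3)] by blast
  have "diff_quot p M s f h \<le> ennreal (\<delta> powr (- s)) * K" if "\<delta> \<le> norm h" for h
  proof -
    have "norm h powr (- s) \<le> \<delta> powr (- s)"
      using assms(4,5) that by (intro powr_mono2') auto
    then show ?thesis
      unfolding diff_quot_def by (intro mult_mono ennreal_leI K(2)) auto
  qed
  then show ?thesis
    using K(1)
    by (intro exI[of _ "omega_ext \<omega> (ennreal (\<delta> powr (- s)) * K)"])
       (auto intro!: omega_ext_less_top omega_ext_mono[OF assms(1)] simp: ennreal_mult_less_top)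
qed

section \<open>Integration against mollifiers\<close>

lemma
  assumes "mollifiers \<rho>" "\<epsilon> > 0"
  shows mollifiers_integrable: "integrable lebesgue (\<rho> \<epsilon>)"
    and mollifiers_nonneg: "\<rho> \<epsilon> z \<ge> 0"
    and mollifiers_integral: "(\<integral>z. \<rho> \<epsilon> z \<partial>lebesgue) = 1"
  using assms by (auto simp: mollifiers_def)

lemma nn_integral_mollifiers_eq_1:
  assumes "mollifiers \<rho>" "\<epsilon> > 0"
  shows "(\<integral>\<^sup>+h. ennreal (\<rho> \<epsilon> h) \<partial>lebesgue) = 1"
  using assms by (simp add: nn_integral_eq_integral mollifiers_integrable mollifiers_nonneg
      mollifiers_integral)

lemma nn_integral_mollifiers_le_SUP:
  fixes G :: "'a::euclidean_space \<Rightarrow> ennreal"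
  assumes "mollifiers \<rho>" "\<epsilon> > 0"
  shows "(\<integral>\<^sup>+h. ennreal (\<rho> \<epsilon> h) * G h \<partial>lebesgue) \<le> (SUP h\<in>-{0}. G h)"
proof -
  have "AE h in lebesgue. ennreal (\<rho> \<epsilon> h) * G h \<le> ennreal (\<rho> \<epsilon> h) * (SUP h\<in>-{0}. G h)"
    using AE_lebesgue_neq[of 0] by eventually_elim (auto intro!: mult_left_mono SUP_upper)
  then have "(\<integral>\<^sup>+h. ennreal (\<rho> \<epsilon> h) * G h \<partial>lebesgue)
      \<le> (\<integral>\<^sup>+h. ennreal (\<rho> \<epsilon> h) * (SUP h\<in>-{0}. G h) \<partial>lebesgue)"
    by (rule nn_integral_mono_AE)
  also have "\<dots> = (SUP h\<in>-{0}. G h)"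
    using borel_measurable_integrable[OF mollifiers_integrable[OF assms]]
    by (simp add: nn_integral_multc nn_integral_mollifiers_eq_1[OF assms])
  finally show ?thesis .
qed

lemma nn_integral_mollifiers_le_tail:
  fixes G :: "'a::euclidean_space \<Rightarrow> ennreal"
  assumes mol: "mollifiers \<rho>" "\<epsilon> > 0" and A: "A \<in> sets lebesgue"
    and G: "\<And>h. h \<noteq> 0 \<Longrightarrow> G h \<le> t + c * indicator A h"
  shows "(\<integral>\<^sup>+h. ennreal (\<rho> \<epsilon> h) * G h \<partial>lebesgue)
    \<le> t + c * ennreal (\<integral>z. indicator A z * \<rho> \<epsilon> z \<partial>lebesgue)"
proof -
  have \<rho>: "\<rho> \<epsilon> \<in> borel_measurable lebesgue" "\<And>z. 0 \<le> \<rho> \<epsilon> z"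
    using mollifiers_integrable[OF mol] mollifiers_nonneg[OF mol] by auto
  have "integrable lebesgue (\<lambda>z. indicator A z * \<rho> \<epsilon> z)"
    using integrable_real_mult_indicator[OF A mollifiers_integrable[OF mol]]
    by (simp add: mult.commute)
  then have tail: "(\<integral>\<^sup>+h. ennreal (indicator A h * \<rho> \<epsilon> h) \<partial>lebesgue)
      = ennreal (\<integral>z. indicator A z * \<rho> \<epsilon> z \<partial>lebesgue)"
    using \<rho>(2) by (intro nn_integral_eq_integral) auto
  have "AE h in lebesgue. ennreal (\<rho> \<epsilon> h) * G h
      \<le> t * ennreal (\<rho> \<epsilon> h) + c * ennreal (indicator A h * \<rho> \<epsilon> h)"
    using AE_lebesgue_neq[of 0]
  proof eventually_elim
    case (elim h)
    have "ennreal (\<rho> \<epsilon> h) * G h \<le> ennreal (\<rho> \<epsilon> h) * (t + c * indicator A h)"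
      using G[OF elim] by (rule mult_left_mono) simp
    then show ?case
      by (cases "h \<in> A") (simp_all add: algebra_simps)
  qed
  then have "(\<integral>\<^sup>+h. ennreal (\<rho> \<epsilon> h) * G h \<partial>lebesgue)
      \<le> (\<integral>\<^sup>+h. t * ennreal (\<rho> \<epsilon> h) + c * ennreal (indicator A h * \<rho> \<epsilon> h) \<partial>lebesgue)"
    by (rule nn_integral_mono_AE)
  also have "\<dots> = t + c * ennreal (\<integral>z. indicator A z * \<rho> \<epsilon> z \<partial>lebesgue)"
    using \<rho> A tail
    by (simp add: nn_integral_add nn_integral_cmult nn_integral_mollifiers_eq_1[OF mol])
  finally show ?thesis .
qed

lemma Limsup_nn_integral_mollifiers_le:
  fixes G :: "'a::euclidean_space \<Rightarrow> ennreal"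
  assumes mol: "mollifiers \<rho>"
    and far: "\<And>\<delta>. \<delta> > 0 \<Longrightarrow> \<exists>c<top. \<forall>h. \<delta> \<le> norm h \<longrightarrow> G h \<le> c"
  shows "Limsup (at_right 0) (\<lambda>\<epsilon>. \<integral>\<^sup>+h. ennreal (\<rho> \<epsilon> h) * G h \<partial>lebesgue) \<le> Limsup (at 0) G"
proof (rule dense_ge)
  fix t assume t: "Limsup (at 0) G < t"
  show "Limsup (at_right 0) (\<lambda>\<epsilon>. \<integral>\<^sup>+h. ennreal (\<rho> \<epsilon> h) * G h \<partial>lebesgue) \<le> t"
  proof (cases "t = top")
    case False
    obtain \<delta> where \<delta>: "\<delta> > 0" "\<And>h. h \<noteq> 0 \<Longrightarrow> dist h 0 < \<delta> \<Longrightarrow> G h < t"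
      using Limsup_lessD[OF t] unfolding eventually_at by auto
    obtain c where c: "c < top" "\<And>h. \<delta> \<le> norm h \<Longrightarrow> G h \<le> c"
      using far[OF \<delta>(1)] by blast
    define A where "A = {z::'a. \<delta> \<le> norm z}"
    have "closed A"
      unfolding A_def by (intro closed_Collect_le continuous_intros)
    then have A: "A \<in> sets lebesgue" by simp
    have G: "G h \<le> t + c * indicator A h" if "h \<noteq> 0" for h
      using c(2)[of h] \<delta>(2)[OF that]
      by (cases "h \<in> A") (auto simp: A_def dist_norm intro: add_increasing)
    define tail where "tail \<epsilon> = (\<integral>z. indicator A z * \<rho> \<epsilon> z \<partial>lebesgue)" for \<epsilon>
    have "(tail \<longlongrightarrow> 0) (at_right 0)"
      using mol \<delta>(1) unfolding mollifiers_def tail_def A_def by blast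
    then have "((\<lambda>\<epsilon>. t + c * ennreal (tail \<epsilon>)) \<longlongrightarrow> t + c * ennreal 0) (at_right 0)"
      using c(1) by (intro tendsto_add tendsto_const tendsto_mult_ennreal tendsto_ennrealI) auto
    then have lim: "((\<lambda>\<epsilon>. t + c * ennreal (tail \<epsilon>)) \<longlongrightarrow> t) (at_right 0)"
      by simp
    have "eventually (\<lambda>\<epsilon>. (\<integral>\<^sup>+h. ennreal (\<rho> \<epsilon> h) * G h \<partial>lebesgue) \<le> t + c * ennreal (tail \<epsilon>))
        (at_right 0)"
      using eventually_at_right_less[of 0]
      by eventually_elim (use nn_integral_mollifiers_le_tail[OF mol _ A G] in \<open>simp add: tail_def\<close>)
    then have "Limsup (at_right 0) (\<lambda>\<epsilon>. \<integral>\<^sup>+h. ennreal (\<rho> \<epsilon> h) * G h \<partial>lebesgue)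
        \<le> Limsup (at_right 0) (\<lambda>\<epsilon>. t + c * ennreal (tail \<epsilon>))"
      by (rule Limsup_mono)
    also have "\<dots> = t"
      using lim by (simp add: lim_imp_Limsup)
    finally show ?thesis .
  qed simp
qed

theorem proposition6p1:
  fixes \<rho> :: "real \<Rightarrow> 'a::euclidean_space \<Rightarrow> real"
    and \<omega> :: "real \<Rightarrow> real" and f :: "'a \<Rightarrow> real"
    and M :: nat and s :: real and p :: ennreal
  assumes "M \<ge> 1" and "s > 0" and "1 \<le> p"
    and "mollifiers \<rho>" and "C_inc_plus \<omega>" and "in_Lp p f"
  shows "(Limsup (at_right 0) (\<lambda>\<epsilon>. D_omega \<omega> p M s (\<rho> \<epsilon>) f)
           \<le> omega_ext \<omega> (Limsup (at 0) (diff_quot p M s f)))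
         \<and> ((SUP \<epsilon>\<in>{0<..}. D_omega \<omega> p M s (\<rho> \<epsilon>) f)
           \<le> omega_ext \<omega> (SUP h\<in>-{0}. diff_quot p M s f h))"
proof
  have cont: "continuous_on {0..} \<omega>" and mono: "mono_on {0..} \<omega>"
    using assms(5) by (auto simp: C_inc_plus_def)
  have "0 < p" using assms(3) by (rule order.strict_trans2[OF zero_less_one])
  let ?G = "\<lambda>h. omega_ext \<omega> (diff_quot p M s f h)"
  have "Limsup (at_right 0) (\<lambda>\<epsilon>. D_omega \<omega> p M s (\<rho> \<epsilon>) f) \<le> Limsup (at 0) ?G"
    unfolding D_omega_def using assms(4)
  proof (rule Limsup_nn_integral_mollifiers_le)
    show "\<exists>c<top. \<forall>h. \<delta> \<le> norm h \<longrightarrow> ?G h \<le> c" if "\<delta> > 0" for \<delta>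
      using omega_ext_diff_quot_bounded_off_0[OF mono \<open>0 < p\<close> assms(6)] assms(2) that by simp
  qed
  also have "\<dots> \<le> omega_ext \<omega> (Limsup (at 0) (diff_quot p M s f))"
    using cont mono by (rule Limsup_omega_ext_le)
  finally show "Limsup (at_right 0) (\<lambda>\<epsilon>. D_omega \<omega> p M s (\<rho> \<epsilon>) f)
    \<le> omega_ext \<omega> (Limsup (at 0) (diff_quot p M s f))" .
  have "D_omega \<omega> p M s (\<rho> \<epsilon>) f \<le> omega_ext \<omega> (SUP h\<in>-{0}. diff_quot p M s f h)"
    if "\<epsilon> > 0" for \<epsilon>
  proof -
    have "D_omega \<omega> p M s (\<rho> \<epsilon>) f \<le> (SUP h\<in>-{0}. ?G h)"
      unfolding D_omega_def using assms(4) that by (rule nn_integral_mollifiers_le_SUP)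
    also have "\<dots> \<le> omega_ext \<omega> (SUP h\<in>-{0}. diff_quot p M s f h)"
      by (intro SUP_least omega_ext_mono[OF mono] SUP_upper)
    finally show ?thesis .
  qed
  then show "(SUP \<epsilon>\<in>{0<..}. D_omega \<omega> p M s (\<rho> \<epsilon>) f)
    \<le> omega_ext \<omega> (SUP h\<in>-{0}. diff_quot p M s f h)"
    by (intro SUP_least) auto
qed

end
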